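(* Let $\mathcal L$ be a finite distributive lattice, $p\in\mathcal L$ and $S\subseteq N(p)$ with $|S|=i$. Let $r=\bigwedge\{q: q\in S\}$ and let $T$ be the set of all upper neighbors of $r$ in the interval $[r,p]$. Then (1) $|T|=i$ and $\bigvee T=p$; (2) $\mathrm{lcm}(u_p,\{u_q\}_{q\in S})=\mathrm{lcm}(u_r,\{u_s\}_{s\in T})$; (3) for any $r'\neq r$ and any $T'\subseteq M(r')$, one has $\mathrm{lcm}(u_{r'},\{u_{s'}\}_{s'\in T'})\neq\mathrm{lcm}(u_p,\{u_q\}_{q\in S})$.
   Context: Let $P$ be the set of join-irreducible elements of $\mathcal L$ (elements with exactly one lower neighbor); for $p\in\mathcal L$ put $\ell(p)=\{q\in P:q\le p\}$. Let $K$ be a field, $S=K[x_p,y_p:p\in P]$ and for $q\in\mathcal L$, $u_q=\prod_{p\in\ell(q)}x_p\prod_{p\in P\setminus\ell(q)}y_p$. $N(p)$ is the set of lower neighbors of $p$ (elements covered by $p$), $M(r)$ the set of upper neighbors of $r$ (elements covering $r$); $[r,p]=\{t:r\le t\le p\}$. *)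

theory Defs
  imports Main
begin

definition covers :: "'a::order \<Rightarrow> 'a \<Rightarrow> bool" where
  "covers p q \<longleftrightarrow> q < p \<and> \<not> (\<exists>t. q < t \<and> t < p)"

definition lower_nbrs :: "'a::order \<Rightarrow> 'a set" where
  "lower_nbrs p = {q. covers p q}"

definition upper_nbrs :: "'a::order \<Rightarrow> 'a set" where
  "upper_nbrs r = {s. covers s r}"

definition join_irr :: "'a::order set" where
  "join_irr = {p. card (lower_nbrs p) = 1}"

definition ell :: "'a::order \<Rightarrow> 'a set" where
  "ell p = {q \<in> join_irr. q \<le> p}"

(* Monomials in S = K[x_p, y_p : p in P] are represented by exponent vectors.
   The variable x_p is Inl p, the variable y_p is Inr p. *)
type_synonym 'a monomial = "'a + 'a \<Rightarrow> nat"

definition umon :: "'a::order \<Rightarrow> 'a monomial" where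
  "umon q v = (case v of
      Inl p \<Rightarrow> (if p \<in> ell q then 1 else 0)
    | Inr p \<Rightarrow> (if p \<in> join_irr - ell q then 1 else 0))"

definition mlcm :: "'a monomial set \<Rightarrow> 'a monomial" where
  "mlcm A v = Max ((\<lambda>m. m v) ` A)"

end

theory Submission
  imports Defs
begin

text \<open>In a finite distributive lattice the map \<open>ell\<close> is Birkhoff's embedding into the down-sets
  of the join-irreducibles: it is injective, turns joins into unions and meets into intersections,
  and a cover \<open>b \<prec> a\<close> adds exactly one element to \<open>ell b\<close>. Consequently the lcm of the
  monomials \<open>u\<^sub>a\<close>, \<open>a \<in> A\<close>, is the squarefree monomial with x-support \<open>ell (\<Squnion>A)\<close> and
  y-support \<open>P - ell (\<Sqinter>A)\<close>, so it determines and is determined by the pair \<open>(\<Squnion>A, \<Sqinter>A)\<close>.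
  For \<open>S \<subseteq> N(p)\<close> each \<open>q \<in> S\<close> removes one element \<open>j\<^sub>q\<close> from \<open>ell p\<close>, and
  \<open>ell r = ell p - J\<close> with \<open>J = {j\<^sub>q}\<close>. Every \<open>ell r \<union> {j}\<close>, \<open>j \<in> J\<close>, is again a down-set,
  so the upper covers of \<open>r\<close> below \<open>p\<close> are exactly the \<open>r \<squnion> j\<close>; they are \<open>|S|\<close> many and
  join to \<open>p\<close>. Both lcms in (2) then correspond to the pair \<open>(p, r)\<close>, whereas the sets in (3)
  have meet \<open>r' \<noteq> r\<close>.\<close>

lemma lower_nbr_above:
  fixes x b :: "'a::{finite, order}"
  assumes "x < b"
  obtains c where "c \<in> lower_nbrs b" "x \<le> c"
proof -
  obtain c where c: "x \<le> c" "c < b" and max: "\<And>y. x \<le> y \<Longrightarrow> y < b \<Longrightarrow> c \<le> y \<Longrightarrow> c = y"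
    using finite_has_maximal[of "{y. x \<le> y \<and> y < b}"] assms by auto
  have "\<not> (c < t \<and> t < b)" for t
  proof
    assume t: "c < t \<and> t < b"
    then have "x \<le> t" using c(1) by (meson less_imp_le order.trans)
    then have "c = t" using t max by (simp add: less_imp_le)
    with t show False by simp
  qed
  then have "c \<in> lower_nbrs b" using c(2) unfolding lower_nbrs_def covers_def by blast
  then show thesis using c(1) by (rule that)
qed

lemma sup_distinct_lower_nbrs:
  fixes a c c' :: "'a::lattice"
  assumes "c \<in> lower_nbrs a" "c' \<in> lower_nbrs a" "c \<noteq> c'"
  shows "sup c c' = a"
proof -
  have "c' < a" using assms(2) unfolding lower_nbrs_def covers_def by simp
  have "c \<noteq> sup c c'"
  proof
    assume "c = sup c c'"
    then have "c' < c" using assms(3) by (metis sup.cobounded2 le_less)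
    with \<open>c' < a\<close> assms(1,2) show False unfolding lower_nbrs_def covers_def by blast
  qed
  then have "c < sup c c'" by (simp add: less_le)
  moreover have "sup c c' \<le> a"
    using assms unfolding lower_nbrs_def covers_def by (simp add: less_imp_le)
  ultimately show ?thesis
    using assms(1) unfolding lower_nbrs_def covers_def by (auto simp: le_less)
qed

lemma join_irr_le_supD:
  fixes j a b :: "'a::{finite, distrib_lattice}"
  assumes "j \<in> join_irr" "j \<le> sup a b"
  shows "j \<le> a \<or> j \<le> b"
proof (rule ccontr)
  assume not_below: "\<not> (j \<le> a \<or> j \<le> b)"
  obtain c where c: "lower_nbrs j = {c}"
    using assms(1) by (auto simp: join_irr_def card_1_singleton_iff)
  have "inf j x \<le> c" if "\<not> j \<le> x" for x
  proof -
    have "inf j x < j" using that by (metis le_iff_inf inf_le1 less_le)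
    then show ?thesis using c by (auto elim: lower_nbr_above)
  qed
  then have "sup (inf j a) (inf j b) \<le> c" using not_below by simp
  moreover have "sup (inf j a) (inf j b) = j"
    using assms(2) by (simp add: inf_sup_distrib1[symmetric] inf.absorb1)
  moreover have "c < j" using c unfolding lower_nbrs_def covers_def by auto
  ultimately show False by (metis leD)
qed

lemma ell_mono: "a \<le> b \<Longrightarrow> ell a \<subseteq> ell b"
  unfolding ell_def by auto

lemma ell_subset_join_irr: "ell a \<subseteq> join_irr"
  unfolding ell_def by auto

lemma ell_sup:
  fixes a b :: "'a::{finite, distrib_lattice}"
  shows "ell (sup a b) = ell a \<union> ell b"
  unfolding ell_def using join_irr_le_supD by (auto intro: le_supI1 le_supI2)

lemma ell_Sup_fin:
  fixes A :: "'a::{finite, distrib_lattice} set"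
  assumes "A \<noteq> {}"
  shows "ell (Sup_fin A) = (\<Union>a\<in>A. ell a)"
  using finite assms by (induction A rule: finite_ne_induct) (simp_all add: ell_sup)

lemma ell_Inf_fin:
  fixes A :: "'a::{finite, lattice} set"
  assumes "A \<noteq> {}"
  shows "ell (Inf_fin A) = (\<Inter>a\<in>A. ell a)"
  using assms Inf_fin.bounded_iff[OF finite assms] unfolding ell_def by auto

lemma ell_subset_imp_le:
  fixes a b :: "'a::{finite, distrib_lattice}"
  assumes "ell a \<subseteq> ell b"
  shows "a \<le> b"
proof (rule ccontr)
  assume "\<not> a \<le> b"
  \<comment> \<open>a minimal \<open>m \<le> a\<close> outside the down-set of \<open>b\<close> must be join-irreducible\<close>
  then obtain m where m: "m \<le> a" "\<not> m \<le> b"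
    and minimal: "\<And>y. y \<le> a \<Longrightarrow> \<not> y \<le> b \<Longrightarrow> y \<le> m \<Longrightarrow> m = y"
    using finite_has_minimal[of "{x. x \<le> a \<and> \<not> x \<le> b}"] by auto
  have below_m: "x \<le> b" if "x < m" for x
  proof (rule ccontr)
    assume "\<not> x \<le> b"
    moreover have "x \<le> a" using that m(1) by (meson less_imp_le order.trans)
    ultimately have "m = x" using that by (intro minimal) (simp_all add: less_imp_le)
    with that show False by simp
  qed
  have "inf m b < m" using m(2) by (metis le_iff_inf inf_le1 less_le)
  then obtain c where c: "c \<in> lower_nbrs m" by (rule lower_nbr_above)
  have "m \<notin> join_irr" using m assms unfolding ell_def by auto
  then have "lower_nbrs m \<noteq> {c}" unfolding join_irr_def by auto
  then obtain c' where c': "c' \<in> lower_nbrs m" "c' \<noteq> c" using c by blast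
  have "c \<le> b" "c' \<le> b"
    using c c' below_m unfolding lower_nbrs_def covers_def by auto
  then have "m \<le> b" using sup_distinct_lower_nbrs[OF c c'(1)] c'(2) by auto
  with m(2) show False ..
qed

lemma ell_subset_iff:
  fixes a b :: "'a::{finite, distrib_lattice}"
  shows "ell a \<subseteq> ell b \<longleftrightarrow> a \<le> b"
  using ell_subset_imp_le ell_mono by blast

lemma inj_ell: "inj (ell :: 'a::{finite, distrib_lattice} \<Rightarrow> 'a set)"
  by (rule injI) (simp add: order_antisym ell_subset_imp_le)

lemma covers_imp_ell_diff_singleton:
  fixes a b :: "'a::{finite, distrib_lattice}"
  assumes "covers a b"
  shows "\<exists>j. ell a - ell b = {j}"
proof -
  have "b < a" using assms unfolding covers_def by simp
  then obtain j where j: "j \<in> ell a - ell b"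
    using ell_subset_iff[of a b] by auto
  have sup_eq: "sup b x = a" if x: "x \<in> ell a - ell b" for x
  proof -
    have "\<not> x \<le> b" using x unfolding ell_def by simp
    then have "b < sup b x" by (metis less_le sup.cobounded1 sup.cobounded2)
    moreover have "sup b x \<le> a" using x \<open>b < a\<close> unfolding ell_def by simp
    ultimately show ?thesis using assms unfolding covers_def by (auto simp: le_less)
  qed
  have "k = j" if k: "k \<in> ell a - ell b" for k
  proof (rule order_antisym)
    show "k \<le> j"
      using k sup_eq[OF j] ell_sup[of b j] unfolding ell_def by auto
    show "j \<le> k"
      using j sup_eq[OF k] ell_sup[of b k] unfolding ell_def by auto
  qed
  with j show ?thesis by blast
qed

lemma ell_diff_singleton_imp_covers:
  fixes a b :: "'a::{finite, distrib_lattice}"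
  assumes "b \<le> a" "ell a - ell b = {j}"
  shows "covers a b"
  unfolding covers_def
proof (intro conjI notI)
  show "b < a" using assms by (metis Diff_cancel insert_not_empty le_less)
  assume "\<exists>t. b < t \<and> t < a"
  then obtain t where t: "b < t" "t < a" by blast
  have bt: "ell b \<subset> ell t"
    using t(1) ell_subset_iff by (metis less_le_not_le psubsetI)
  then obtain x where x: "x \<in> ell t - ell b" by (meson Diff_iff psubset_imp_ex_mem)
  have "ell t \<subseteq> ell a" using t(2) by (simp add: ell_mono less_imp_le)
  with x have "x \<in> ell a - ell b" by blast
  with x assms(2) have "j \<in> ell t" by simp
  then have "ell a \<subseteq> ell t" using psubset_imp_subset[OF bt] assms(2) by (auto simp: set_eq_iff)
  then show False using t(2) ell_subset_iff by (metis less_le_not_le)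
qed

lemma inj_on_sup_join_irr:
  fixes r :: "'a::{finite, distrib_lattice}"
  shows "inj_on (sup r) (join_irr - ell r)"
proof (rule inj_onI)
  fix j j' assume j: "j \<in> join_irr - ell r" and j': "j' \<in> join_irr - ell r"
    and eq: "sup r j = sup r j'"
  have "j \<le> sup r j'" "j' \<le> sup r j" using eq by (metis sup.cobounded2)+
  then have "j \<le> j'" "j' \<le> j"
    using join_irr_le_supD j j' unfolding ell_def by blast+
  then show "j = j'" by simp
qed

lemma Sup_fin_sup_ell_diff:
  fixes r p :: "'a::{finite, distrib_lattice}"
  assumes "r < p"
  shows "Sup_fin (sup r ` (ell p - ell r)) = p"
proof -
  have ne: "ell p - ell r \<noteq> {}" using assms ell_subset_iff by (metis Diff_eq_empty_iff less_le_not_le)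
  have "ell (Sup_fin (sup r ` (ell p - ell r))) = (\<Union>j\<in>ell p - ell r. ell r \<union> ell j)"
    using ne by (simp add: ell_Sup_fin ell_sup)
  also have "\<dots> = ell p"
  proof
    show "(\<Union>j\<in>ell p - ell r. ell r \<union> ell j) \<subseteq> ell p"
      using assms ell_mono by (auto simp: ell_def less_imp_le)
    show "ell p \<subseteq> (\<Union>j\<in>ell p - ell r. ell r \<union> ell j)"
      using ne by (auto simp: ell_def)
  qed
  finally show ?thesis by (rule injD[OF inj_ell])
qed

lemma Inf_fin_insert_lower:
  fixes A :: "'a::semilattice_inf set"
  assumes "finite A" "\<forall>a\<in>A. m \<le> a"
  shows "Inf_fin (insert m A) = m"
  using assms by (cases "A = {}") (simp_all add: inf.absorb1 Inf_fin.bounded_iff)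

lemma Sup_fin_insert_upper:
  fixes A :: "'a::semilattice_sup set"
  assumes "finite A" "\<forall>a\<in>A. a \<le> m"
  shows "Sup_fin (insert m A) = m"
  using assms by (cases "A = {}") (simp_all add: sup.absorb1 Sup_fin.bounded_iff)

lemma Inf_fin_lower_nbrs_less:
  fixes p :: "'a::{finite, lattice}"
  assumes "S \<subseteq> lower_nbrs p" "S \<noteq> {}"
  shows "Inf_fin S < p"
proof -
  obtain q where q: "q \<in> S" using assms(2) by blast
  then have "Inf_fin S \<le> q" by (simp add: Inf_fin.coboundedI)
  also have "q < p" using q assms(1) unfolding lower_nbrs_def covers_def by auto
  finally show ?thesis .
qed

lemma bij_betw_lower_nbrs_ell_diff_Inf_fin:
  fixes p :: "'a::{finite, distrib_lattice}"
  assumes "S \<subseteq> lower_nbrs p" "S \<noteq> {}"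
  shows "bij_betw (\<lambda>q. the_elem (ell p - ell q)) S (ell p - ell (Inf_fin S))"
proof (rule bij_betw_imageI)
  have diff: "ell p - ell q = {the_elem (ell p - ell q)}" if "q \<in> S" for q
  proof -
    have "covers p q" using assms(1) that unfolding lower_nbrs_def by auto
    then obtain j where "ell p - ell q = {j}" using covers_imp_ell_diff_singleton by blast
    then show ?thesis by simp
  qed
  have below: "ell q \<subseteq> ell p" if "q \<in> S" for q
  proof -
    have "q < p" using assms(1) that unfolding lower_nbrs_def covers_def by auto
    then show ?thesis by (simp add: ell_mono less_imp_le)
  qed
  show "inj_on (\<lambda>q. the_elem (ell p - ell q)) S"
  proof (rule inj_onI)
    fix q q' assume q: "q \<in> S" and q': "q' \<in> S"
      and eq: "the_elem (ell p - ell q) = the_elem (ell p - ell q')"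
    have "ell p - ell q = ell p - ell q'" using diff[OF q] diff[OF q'] eq by simp
    then have "ell q = ell q'" using below[OF q] below[OF q'] by blast
    then show "q = q'" by (rule injD[OF inj_ell])
  qed
  have "ell p - ell (Inf_fin S) = (\<Union>q\<in>S. ell p - ell q)"
    using assms(2) by (auto simp: ell_Inf_fin)
  also have "\<dots> = (\<lambda>q. the_elem (ell p - ell q)) ` S"
    using diff by blast
  finally show "(\<lambda>q. the_elem (ell p - ell q)) ` S = ell p - ell (Inf_fin S)" ..
qed

lemma ell_sup_Inf_fin_lower_nbrs:
  fixes p :: "'a::{finite, distrib_lattice}"
  assumes "S \<subseteq> lower_nbrs p" "S \<noteq> {}" "j \<in> ell p - ell (Inf_fin S)"
  shows "ell (sup (Inf_fin S) j) = insert j (ell (Inf_fin S))"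
proof -
  have "k \<in> insert j (ell (Inf_fin S))" if k: "k \<in> ell j" for k
  proof (rule ccontr)
    assume "k \<notin> insert j (ell (Inf_fin S))"
    \<comment> \<open>then \<open>k\<close> is the element removed by some \<open>q \<in> S\<close>, yet \<open>j \<ge> k\<close> survives in \<open>ell q\<close>\<close>
    then obtain q where q: "q \<in> S" "k \<notin> ell q" and "k \<noteq> j"
      using assms(2) by (auto simp: ell_Inf_fin)
    have "covers p q" using assms(1) q(1) unfolding lower_nbrs_def by auto
    then obtain j' where j': "ell p - ell q = {j'}" using covers_imp_ell_diff_singleton by blast
    have "k \<in> ell p" using k assms(3) unfolding ell_def by auto
    then have "ell p - ell q = {k}" using q(2) j' by auto
    then have "j \<in> ell q" using assms(3) \<open>k \<noteq> j\<close> by (metis DiffD1 DiffI singletonD)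
    then have "k \<in> ell q" using k unfolding ell_def by auto
    with q(2) show False ..
  qed
  moreover have "j \<in> ell j" using assms(3) unfolding ell_def by simp
  ultimately show ?thesis by (auto simp: ell_sup)
qed

lemma upper_nbrs_Inf_fin_lower_nbrs:
  fixes p :: "'a::{finite, distrib_lattice}"
  assumes "S \<subseteq> lower_nbrs p" "S \<noteq> {}"
  shows "{s \<in> upper_nbrs (Inf_fin S). s \<le> p} = sup (Inf_fin S) ` (ell p - ell (Inf_fin S))"
    (is "?T = sup ?r ` ?J")
proof
  have "?r \<le> p" using Inf_fin_lower_nbrs_less[OF assms] by simp
  have ell_sup_r: "ell (sup ?r j) = insert j (ell ?r)" if "j \<in> ?J" for j
    using ell_sup_Inf_fin_lower_nbrs[OF assms that] .
  show "sup ?r ` ?J \<subseteq> ?T"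
  proof
    fix s assume "s \<in> sup ?r ` ?J"
    then obtain j where j: "j \<in> ?J" and s: "s = sup ?r j" by blast
    have "ell s - ell ?r = {j}" using ell_sup_r[OF j] j s by auto
    then have "covers s ?r" using s by (intro ell_diff_singleton_imp_covers) simp_all
    moreover have "s \<le> p" using j s \<open>?r \<le> p\<close> unfolding ell_def by simp
    ultimately show "s \<in> ?T" unfolding upper_nbrs_def by simp
  qed
  show "?T \<subseteq> sup ?r ` ?J"
  proof
    fix s assume "s \<in> ?T"
    then have cov: "covers s ?r" and "s \<le> p" unfolding upper_nbrs_def by simp_all
    obtain j where j: "ell s - ell ?r = {j}" using covers_imp_ell_diff_singleton[OF cov] ..
    have "?r \<le> s" using cov unfolding covers_def by (simp add: less_imp_le)
    then have "ell ?r \<subseteq> ell s" by (rule ell_mono)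
    then have "ell s = insert j (ell ?r)" using j by blast
    moreover have "j \<in> ?J" using j ell_mono[OF \<open>s \<le> p\<close>] by blast
    ultimately have "ell s = ell (sup ?r j)" using ell_sup_r by simp
    then have "s = sup ?r j" by (rule injD[OF inj_ell])
    with \<open>j \<in> ?J\<close> show "s \<in> sup ?r ` ?J" by blast
  qed
qed

lemma card_upper_nbrs_Inf_fin_lower_nbrs:
  fixes p :: "'a::{finite, distrib_lattice}"
  assumes "S \<subseteq> lower_nbrs p" "S \<noteq> {}"
  shows "card {s \<in> upper_nbrs (Inf_fin S). s \<le> p} = card S"
proof -
  have "inj_on (sup (Inf_fin S)) (ell p - ell (Inf_fin S))"
    using ell_subset_join_irr by (intro inj_on_subset[OF inj_on_sup_join_irr]) blast
  then have "card {s \<in> upper_nbrs (Inf_fin S). s \<le> p} = card (ell p - ell (Inf_fin S))"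
    unfolding upper_nbrs_Inf_fin_lower_nbrs[OF assms] by (rule card_image)
  also have "\<dots> = card S"
    using bij_betw_same_card[OF bij_betw_lower_nbrs_ell_diff_Inf_fin[OF assms]] by simp
  finally show ?thesis .
qed

lemma Sup_fin_upper_nbrs_Inf_fin_lower_nbrs:
  fixes p :: "'a::{finite, distrib_lattice}"
  assumes "S \<subseteq> lower_nbrs p" "S \<noteq> {}"
  shows "Sup_fin {s \<in> upper_nbrs (Inf_fin S). s \<le> p} = p"
  unfolding upper_nbrs_Inf_fin_lower_nbrs[OF assms]
  using Inf_fin_lower_nbrs_less[OF assms] by (rule Sup_fin_sup_ell_diff)

definition sqfree_monomial :: "'a set \<Rightarrow> 'a set \<Rightarrow> 'a monomial" where
  "sqfree_monomial X Y v = (case v of Inl p \<Rightarrow> of_bool (p \<in> X) | Inr p \<Rightarrow> of_bool (p \<in> Y))"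

lemma umon_eq_sqfree_monomial: "umon q = sqfree_monomial (ell q) (join_irr - ell q)"
  by (simp add: fun_eq_iff umon_def sqfree_monomial_def split: sum.split)

lemma sqfree_monomial_eq_iff:
  "sqfree_monomial X Y = sqfree_monomial X' Y' \<longleftrightarrow> X = X' \<and> Y = Y'"
proof
  assume eq: "sqfree_monomial X Y = sqfree_monomial X' Y'"
  have "p \<in> X \<longleftrightarrow> p \<in> X'" "p \<in> Y \<longleftrightarrow> p \<in> Y'" for p
    using fun_cong[OF eq, of "Inl p"] fun_cong[OF eq, of "Inr p"]
    by (simp_all add: sqfree_monomial_def of_bool_eq_iff)
  then show "X = X' \<and> Y = Y'" by blast
qed simp

lemma Max_of_bool_image:
  assumes "finite I" "I \<noteq> {}"
  shows "Max ((\<lambda>i. of_bool (P i)) ` I) = (of_bool (\<exists>i\<in>I. P i) :: nat)"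
proof (cases "\<exists>i\<in>I. P i")
  case True
  then show ?thesis using assms by (intro Max_eqI) (auto simp: of_bool_def)
next
  case False
  then show ?thesis using assms by simp
qed

lemma mlcm_sqfree_monomial:
  assumes "finite I" "I \<noteq> {}"
  shows "mlcm ((\<lambda>i. sqfree_monomial (X i) (Y i)) ` I)
    = sqfree_monomial (\<Union>i\<in>I. X i) (\<Union>i\<in>I. Y i)"
  by (simp add: fun_eq_iff mlcm_def sqfree_monomial_def image_image Max_of_bool_image[OF assms]
      split: sum.split)

lemma mlcm_umon:
  fixes A :: "'a::{finite, distrib_lattice} set"
  assumes "A \<noteq> {}"
  shows "mlcm (umon ` A) = sqfree_monomial (ell (Sup_fin A)) (join_irr - ell (Inf_fin A))"
proof -
  have "mlcm (umon ` A) = sqfree_monomial (\<Union>a\<in>A. ell a) (\<Union>a\<in>A. join_irr - ell a)"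
    using mlcm_sqfree_monomial[OF finite assms, of ell "\<lambda>a. join_irr - ell a"]
    by (simp add: umon_eq_sqfree_monomial[abs_def])
  also have "(\<Union>a\<in>A. join_irr - ell a) = join_irr - (\<Inter>a\<in>A. ell a)"
    using assms by blast
  finally show ?thesis using assms by (simp add: ell_Sup_fin ell_Inf_fin)
qed

lemma mlcm_umon_eq_iff:
  fixes A B :: "'a::{finite, distrib_lattice} set"
  assumes "A \<noteq> {}" "B \<noteq> {}"
  shows "mlcm (umon ` A) = mlcm (umon ` B) \<longleftrightarrow> Sup_fin A = Sup_fin B \<and> Inf_fin A = Inf_fin B"
proof -
  have "join_irr - ell a = join_irr - ell b \<longleftrightarrow> ell a = ell b" for a b :: 'a
    using ell_subset_join_irr[of a] ell_subset_join_irr[of b] by blast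
  then show ?thesis
    using assms by (simp add: mlcm_umon sqfree_monomial_eq_iff inj_eq[OF inj_ell])
qed

theorem lemma3p5:
  fixes p :: "'a::{finite, distrib_lattice}"
    and S :: "'a set" and i :: nat
  assumes "S \<subseteq> lower_nbrs p"
    and "card S = i"
    and "S \<noteq> {}"
  defines "r \<equiv> Inf_fin S"
  defines "T \<equiv> {s \<in> upper_nbrs r. r \<le> s \<and> s \<le> p}"
  shows "(card T = i \<and> Sup_fin T = p)
    \<and> mlcm (insert (umon p) (umon ` S)) = mlcm (insert (umon r) (umon ` T))
    \<and> (\<forall>r' T'. r' \<noteq> r \<and> T' \<subseteq> upper_nbrs r' \<longrightarrow>
           mlcm (insert (umon r') (umon ` T')) \<noteq> mlcm (insert (umon p) (umon ` S)))"
proof -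
  have "r < p" unfolding r_def using assms(1,3) by (rule Inf_fin_lower_nbrs_less)
  have T_eq: "T = {s \<in> upper_nbrs r. s \<le> p}"
    unfolding T_def upper_nbrs_def covers_def by (auto simp: less_imp_le)
  have card_T: "card T = i"
    unfolding T_eq r_def using card_upper_nbrs_Inf_fin_lower_nbrs[OF assms(1,3)] assms(2) by simp
  have Sup_T: "Sup_fin T = p"
    unfolding T_eq r_def by (rule Sup_fin_upper_nbrs_Inf_fin_lower_nbrs[OF assms(1,3)])
  have "T \<noteq> {}" using card_T assms(2,3) by auto
  have Inf_pS: "Inf_fin (insert p S) = r"
    using assms(3) \<open>r < p\<close> unfolding r_def by (simp add: inf.absorb2 less_imp_le)
  have Sup_pS: "Sup_fin (insert p S) = p"
    using assms(1) by (intro Sup_fin_insert_upper) (auto simp: lower_nbrs_def covers_def less_imp_le)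
  have Inf_insert_lower: "Inf_fin (insert r' T') = r'" if "T' \<subseteq> upper_nbrs r'" for r' :: 'a and T'
    using that by (intro Inf_fin_insert_lower) (auto simp: upper_nbrs_def covers_def less_imp_le)
  have "Sup_fin (insert r T) = p"
    using \<open>T \<noteq> {}\<close> Sup_T \<open>r < p\<close> by (simp add: sup.absorb2 less_imp_le)
  moreover have "T \<subseteq> upper_nbrs r" unfolding T_def by blast
  ultimately have lcm_eq: "mlcm (insert (umon p) (umon ` S)) = mlcm (insert (umon r) (umon ` T))"
    using mlcm_umon_eq_iff[of "insert p S" "insert r T"] Inf_insert_lower Inf_pS Sup_pS by simp
  have "mlcm (insert (umon r') (umon ` T')) \<noteq> mlcm (insert (umon p) (umon ` S))"
    if "r' \<noteq> r" "T' \<subseteq> upper_nbrs r'" for r' T'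
    using mlcm_umon_eq_iff[of "insert r' T'" "insert p S"] Inf_insert_lower[OF that(2)] Inf_pS that(1)
    by simp
  with card_T Sup_T lcm_eq show ?thesis by blast
qed

end
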